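(* In the setting below, $$B_0\ \cong\ \bigoplus_{e\in G_0}\ \bigoplus_{f\in G_0:\ T_e\cap S_f\neq\emptyset}M_{n_{e,f}}(E_e)$$ as unital $K$-algebras, where $n_{e,f}=|T_e\cap S_f|$. Here $B_0$ is a unital subalgebra of $B$ with identity $\sum_{e\in G_0}\sum_{g\in T_e}1_e\delta_e\#v_g$.
   Context: Groupoid conventions. A groupoid is a small category with all morphisms invertible, regarded as the set $G$ of morphisms. For $g\in G$ we have $d(g)=g^{-1}g$ and $r(g)=gg^{-1}$. The product $gh$ is defined iff $d(g)=r(h)$, and then $d(gh)=d(h)$, $r(gh)=r(g)$. $G^2=\{(g,h):d(g)=r(h)\}$, and $G_0$ is the set of identities. For $e\in G_0$: - $G_e=\{g: d(g)=r(g)=e\}$; - $S_e=\{g\in G: d(g)=e\}$; - $T_e=\{g\in G: r(g)=e\}$. Actions. An action of $G$ on a ring $R$ is a pair $\beta=(\{E_g\},\{\beta_g\})$ where each $E_g=E_{r(g)}$ is an ideal of $R$, each $\beta_g:E_{g^{-1}}\to E_g$ is a ring isomorphism, $\beta_e=\mathrm{id}$ for $e\in G_0$, and $\beta_g\beta_h=\beta_{gh}$ on $E_{h^{-1}}$ for $(g,h)\in G^2$. Skew groupoid ring. $R\star_\beta G=\bigoplus_{g\in G}E_g\delta_g$ (the $\delta_g$ are formal symbols), with $(x\delta_g)(y\delta_h)=x\beta_g(y)\delta_{gh}$ if $(g,h)\in G^2$ and $0$ otherwise, for $x\in E_g$, $y\in E_h$. $KG^*$. The free $K$-module with basis $\{v_g\}_{g\in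 G}$, with $v_gv_h=\delta_{g,h}v_g$ and identity $\sum_g v_g$. Weak smash product. For a unital $G$-graded algebra $A=\bigoplus A_g$ (with $A_gA_h\subseteq A_{gh}$ if $(g,h)\in G^2$, and $0$ otherwise), $KG^*$ acts by $v_h\cdot a=a_h$ (the $h$-component). $A\#KG^*=A\otimes_K KG^*$ with $(a\#v_g)(b\#v_h)=a(v_{gh^{-1}}\cdot b)\#v_h$ if $d(g)=d(h)$, and $0$ otherwise. Setting. $K$ is a commutative unital ring and $G$ is a finite groupoid. $R$ is a not necessarily unital $K$-algebra with an action $\beta$ of $G$ (by $K$-linear maps) such that each $E_e$, $e\in G_0$, has an identity element $1_e$; put $1_g:=1_{r(g)}$, the identity of $E_g$. Then $R\star_\beta G$ is a unital $K$-algebra with identity $\sum_{e\in G_0}1_e\delta_e$. It is $G$-graded with $g$-component $E_g\delta_g$, so that $v_k\cdot(a_g\delta_g)=\delta_{k,g}a_g\delta_g$. Let $B=(R\star_\beta G)\#KG^*=\bigoplus_{g,h\in G}E_g\delta_g\#v_h$ and $$B_0=\bigoplus_{g,h\in G:\ d(g)=r(g)=r(h)}E_g\delta_g\#v_h.$$ $M_n(X)$ denotes the $n\times n$ matrix algebra over $X$. *)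

theory Defs
  imports Main
begin

text \<open>A groupoid is given by its set of morphisms G, a product mult (only meaningful on
composable pairs) and an inversion gi.  Domain and range are d(g) = g^-1 g, r(g) = g g^-1.\<close>

definition gd :: "('g \<Rightarrow> 'g \<Rightarrow> 'g) \<Rightarrow> ('g \<Rightarrow> 'g) \<Rightarrow> 'g \<Rightarrow> 'g" where
  "gd mult gi g = mult (gi g) g"

definition gr :: "('g \<Rightarrow> 'g \<Rightarrow> 'g) \<Rightarrow> ('g \<Rightarrow> 'g) \<Rightarrow> 'g \<Rightarrow> 'g" where
  "gr mult gi g = mult g (gi g)"

definition groupoid :: "'g set \<Rightarrow> ('g \<Rightarrow> 'g \<Rightarrow> 'g) \<Rightarrow> ('g \<Rightarrow> 'g) \<Rightarrow> bool" where
  "groupoid G mult gi \<longleftrightarrow>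
     (\<forall>g\<in>G. gi g \<in> G) \<and>
     (\<forall>g\<in>G. gd mult gi (gi g) = gr mult gi g \<and> gr mult gi (gi g) = gd mult gi g) \<and>
     (\<forall>g\<in>G. \<forall>h\<in>G. gd mult gi g = gr mult gi h \<longrightarrow>
         mult g h \<in> G \<and> gd mult gi (mult g h) = gd mult gi h \<and> gr mult gi (mult g h) = gr mult gi g) \<and>
     (\<forall>g\<in>G. \<forall>h\<in>G. \<forall>l\<in>G. gd mult gi g = gr mult gi h \<and> gd mult gi h = gr mult gi l \<longrightarrow>
         mult (mult g h) l = mult g (mult h l)) \<and>
     (\<forall>g\<in>G. mult (gr mult gi g) g = g \<and> mult g (gd mult gi g) = g)"

definition objects :: "'g set \<Rightarrow> ('g \<Rightarrow> 'g \<Rightarrow> 'g) \<Rightarrow> ('g \<Rightarrow> 'g) \<Rightarrow> 'g set" where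
  "objects G mult gi = gd mult gi ` G"

definition Sset :: "'g set \<Rightarrow> ('g \<Rightarrow> 'g \<Rightarrow> 'g) \<Rightarrow> ('g \<Rightarrow> 'g) \<Rightarrow> 'g \<Rightarrow> 'g set" where
  "Sset G mult gi e = {g\<in>G. gd mult gi g = e}"

definition Tset :: "'g set \<Rightarrow> ('g \<Rightarrow> 'g \<Rightarrow> 'g) \<Rightarrow> ('g \<Rightarrow> 'g) \<Rightarrow> 'g \<Rightarrow> 'g set" where
  "Tset G mult gi e = {g\<in>G. gr mult gi g = e}"

text \<open>R is the (not necessarily unital) ring given by the type 'r (class ring is non-unital);
its K-algebra structure is the scalar multiplication smul.\<close>

definition kalgebra :: "('k::comm_ring_1 \<Rightarrow> 'r::ring \<Rightarrow> 'r) \<Rightarrow> bool" where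
  "kalgebra smul \<longleftrightarrow>
     (\<forall>a x y. smul a (x + y) = smul a x + smul a y) \<and>
     (\<forall>a b x. smul (a + b) x = smul a x + smul b x) \<and>
     (\<forall>a b x. smul (a * b) x = smul a (smul b x)) \<and>
     (\<forall>x. smul 1 x = x) \<and>
     (\<forall>a x y. smul a (x * y) = smul a x * y \<and> smul a (x * y) = x * smul a y)"

definition is_ideal :: "'r::ring set \<Rightarrow> bool" where
  "is_ideal I \<longleftrightarrow> 0 \<in> I \<and> (\<forall>x\<in>I. \<forall>y\<in>I. x - y \<in> I) \<and> (\<forall>x\<in>I. \<forall>y. x * y \<in> I \<and> y * x \<in> I)"

definition groupoid_action ::
  "'g set \<Rightarrow> ('g \<Rightarrow> 'g \<Rightarrow> 'g) \<Rightarrow> ('g \<Rightarrow> 'g) \<Rightarrow> ('k::comm_ring_1 \<Rightarrow> 'r::ring \<Rightarrow> 'r)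
     \<Rightarrow> ('g \<Rightarrow> 'r set) \<Rightarrow> ('g \<Rightarrow> 'r \<Rightarrow> 'r) \<Rightarrow> bool" where
  "groupoid_action G mult gi smul E \<beta> \<longleftrightarrow>
     (\<forall>g\<in>G. E g = E (gr mult gi g)) \<and>
     (\<forall>e\<in>objects G mult gi. is_ideal (E e)) \<and>
     (\<forall>g\<in>G. bij_betw (\<beta> g) (E (gi g)) (E g) \<and>
        (\<forall>x\<in>E (gi g). \<forall>y\<in>E (gi g). \<beta> g (x + y) = \<beta> g x + \<beta> g y \<and> \<beta> g (x * y) = \<beta> g x * \<beta> g y) \<and>
        (\<forall>a. \<forall>x\<in>E (gi g). \<beta> g (smul a x) = smul a (\<beta> g x))) \<and>
     (\<forall>e\<in>objects G mult gi. \<forall>x\<in>E e. \<beta> e x = x) \<and>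
     (\<forall>g\<in>G. \<forall>h\<in>G. gd mult gi g = gr mult gi h \<longrightarrow>
        (\<forall>x\<in>E (gi h). \<beta> g (\<beta> h x) = \<beta> (mult g h) x))"

definition local_units :: "'g set \<Rightarrow> ('g \<Rightarrow> 'g \<Rightarrow> 'g) \<Rightarrow> ('g \<Rightarrow> 'g) \<Rightarrow> ('g \<Rightarrow> 'r::ring set) \<Rightarrow> ('g \<Rightarrow> 'r) \<Rightarrow> bool" where
  "local_units G mult gi E one \<longleftrightarrow>
     (\<forall>e\<in>objects G mult gi. one e \<in> E e \<and> (\<forall>x\<in>E e. one e * x = x \<and> x * one e = x))"

text \<open>An element sum_g x_g delta_g of R *_beta G is the function x with x g in E g, zero off G.\<close>
definition skew_carrier :: "'g set \<Rightarrow> ('g \<Rightarrow> 'r::ring set) \<Rightarrow> ('g \<Rightarrow> 'r) set" where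
  "skew_carrier G E = {x. (\<forall>g\<in>G. x g \<in> E g) \<and> (\<forall>g. g \<notin> G \<longrightarrow> x g = 0)}"

definition skew_mult :: "'g set \<Rightarrow> ('g \<Rightarrow> 'g \<Rightarrow> 'g) \<Rightarrow> ('g \<Rightarrow> 'g) \<Rightarrow> ('g \<Rightarrow> 'r::ring \<Rightarrow> 'r)
     \<Rightarrow> ('g \<Rightarrow> 'r) \<Rightarrow> ('g \<Rightarrow> 'r) \<Rightarrow> ('g \<Rightarrow> 'r)" where
  "skew_mult G mult gi \<beta> x y = (\<lambda>m. \<Sum>(g, h)\<in>{(g, h). g \<in> G \<and> h \<in> G \<and> gd mult gi g = gr mult gi h \<and> mult g h = m}.
       x g * \<beta> g (y h))"

text \<open>The action of v_k in KG^* on the graded algebra: projection to the k-component.\<close>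
definition hcomp :: "'g \<Rightarrow> ('g \<Rightarrow> 'r::ring) \<Rightarrow> ('g \<Rightarrow> 'r)" where
  "hcomp k x = (\<lambda>g. if g = k then x g else 0)"

text \<open>An element sum_h a_h # v_h of (R *_beta G) # KG^* (KG^* is free on the v_h) is a function
X with X h the coefficient a_h in R *_beta G; thus X h g is the coefficient of delta_g # v_h.\<close>
definition smash_carrier :: "'g set \<Rightarrow> ('g \<Rightarrow> 'r::ring set) \<Rightarrow> ('g \<Rightarrow> 'g \<Rightarrow> 'r) set" where
  "smash_carrier G E = {X. (\<forall>h\<in>G. X h \<in> skew_carrier G E) \<and> (\<forall>h. h \<notin> G \<longrightarrow> X h = (\<lambda>_. 0))}"

text \<open>(a # v_k)(b # v_l) = a (v_{k l^-1} . b) # v_l if d(k) = d(l), else 0, extended bilinearly.\<close>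
definition smash_mult :: "'g set \<Rightarrow> ('g \<Rightarrow> 'g \<Rightarrow> 'g) \<Rightarrow> ('g \<Rightarrow> 'g) \<Rightarrow> ('g \<Rightarrow> 'r::ring \<Rightarrow> 'r)
     \<Rightarrow> ('g \<Rightarrow> 'g \<Rightarrow> 'r) \<Rightarrow> ('g \<Rightarrow> 'g \<Rightarrow> 'r) \<Rightarrow> ('g \<Rightarrow> 'g \<Rightarrow> 'r)" where
  "smash_mult G mult gi \<beta> X Y = (\<lambda>l m. if l \<in> G then
       (\<Sum>k\<in>{k\<in>G. gd mult gi k = gd mult gi l}.
          skew_mult G mult gi \<beta> (X k) (hcomp (mult k (gi l)) (Y l)) m)
     else 0)"

text \<open>B_0 = sum over d(g) = r(g) = r(h) of E_g delta_g # v_h\<close>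
definition B0_carrier :: "'g set \<Rightarrow> ('g \<Rightarrow> 'g \<Rightarrow> 'g) \<Rightarrow> ('g \<Rightarrow> 'g) \<Rightarrow> ('g \<Rightarrow> 'r::ring set) \<Rightarrow> ('g \<Rightarrow> 'g \<Rightarrow> 'r) set" where
  "B0_carrier G mult gi E = {X\<in>smash_carrier G E. \<forall>h\<in>G. \<forall>g\<in>G. X h g \<noteq> 0 \<longrightarrow>
       gd mult gi g = gr mult gi g \<and> gr mult gi g = gr mult gi h}"

definition B0_one :: "'g set \<Rightarrow> ('g \<Rightarrow> 'g \<Rightarrow> 'g) \<Rightarrow> ('g \<Rightarrow> 'g) \<Rightarrow> ('g \<Rightarrow> 'r::ring) \<Rightarrow> ('g \<Rightarrow> 'g \<Rightarrow> 'r)" where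
  "B0_one G mult gi one = (\<lambda>h g. if h \<in> G \<and> g \<in> objects G mult gi \<and> gr mult gi h = g then one g else 0)"

definition mat_index :: "'g set \<Rightarrow> ('g \<Rightarrow> 'g \<Rightarrow> 'g) \<Rightarrow> ('g \<Rightarrow> 'g) \<Rightarrow> ('g \<times> 'g) set" where
  "mat_index G mult gi = {(e, f). e \<in> objects G mult gi \<and> f \<in> objects G mult gi \<and>
       Tset G mult gi e \<inter> Sset G mult gi f \<noteq> {}}"

definition nsize :: "'g set \<Rightarrow> ('g \<Rightarrow> 'g \<Rightarrow> 'g) \<Rightarrow> ('g \<Rightarrow> 'g) \<Rightarrow> 'g \<Rightarrow> 'g \<Rightarrow> nat" where
  "nsize G mult gi e f = card (Tset G mult gi e \<inter> Sset G mult gi f)"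

text \<open>An element of the direct sum over (e,f) of M_{n_{e,f}}(E_e) is a function M with
M e f the n_{e,f} x n_{e,f} matrix (entries indexed by i, j < n_{e,f}), zero elsewhere.\<close>
definition mat_carrier :: "'g set \<Rightarrow> ('g \<Rightarrow> 'g \<Rightarrow> 'g) \<Rightarrow> ('g \<Rightarrow> 'g) \<Rightarrow> ('g \<Rightarrow> 'r::ring set)
     \<Rightarrow> ('g \<Rightarrow> 'g \<Rightarrow> nat \<Rightarrow> nat \<Rightarrow> 'r) set" where
  "mat_carrier G mult gi E = {M. \<forall>e f i j.
       (if (e, f) \<in> mat_index G mult gi \<and> i < nsize G mult gi e f \<and> j < nsize G mult gi e f
        then M e f i j \<in> E e else M e f i j = 0)}"

definition mat_mult :: "'g set \<Rightarrow> ('g \<Rightarrow> 'g \<Rightarrow> 'g) \<Rightarrow> ('g \<Rightarrow> 'g) \<Rightarrow> ('g \<Rightarrow> 'g \<Rightarrow> nat \<Rightarrow> nat \<Rightarrow> 'r::ring)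
     \<Rightarrow> ('g \<Rightarrow> 'g \<Rightarrow> nat \<Rightarrow> nat \<Rightarrow> 'r) \<Rightarrow> ('g \<Rightarrow> 'g \<Rightarrow> nat \<Rightarrow> nat \<Rightarrow> 'r)" where
  "mat_mult G mult gi M N = (\<lambda>e f i j. \<Sum>k<nsize G mult gi e f. M e f i k * N e f k j)"

definition mat_one :: "'g set \<Rightarrow> ('g \<Rightarrow> 'g \<Rightarrow> 'g) \<Rightarrow> ('g \<Rightarrow> 'g) \<Rightarrow> ('g \<Rightarrow> 'r::ring)
     \<Rightarrow> ('g \<Rightarrow> 'g \<Rightarrow> nat \<Rightarrow> nat \<Rightarrow> 'r)" where
  "mat_one G mult gi one = (\<lambda>e f i j.
       if (e, f) \<in> mat_index G mult gi \<and> i < nsize G mult gi e f \<and> i = j then one e else 0)"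

end

theory Submission
  imports Defs
begin

text \<open>
  An element \<open>X\<close> of \<open>B = (R \<star>\<^sub>\<beta> G) # KG\<^sup>*\<close> is a coefficient function, \<open>X l g\<close> being the
  coefficient of \<open>\<delta>\<^sub>g # v\<^sub>l\<close>; it lies in \<open>B_0\<close> iff \<open>X l g \<in> E (r l)\<close> and \<open>X l g = 0\<close> unless
  \<open>d g = r g = r l\<close>.  The proof proceeds in three steps.
  (1) Groupoid and action bookkeeping, and the product formula in \<open>B_0\<close>: the \<open>(l, m)\<close>-coefficient
      of \<open>X Y\<close> is \<open>\<Sum>\<^sub>k X k (m l k\<^sup>-\<^sup>1) \<beta>\<^bsub>m l k\<^sup>-\<^sup>1\<^esub>(Y l (k l\<^sup>-\<^sup>1))\<close>, summed over the
      morphisms \<open>k\<close> parallel to \<open>l\<close>.  Closure of \<open>B_0\<close> under the operations follows.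
  (2) Matrix coordinates: \<open>B_0\<close> splits into blocks indexed by pairs \<open>(e, f)\<close> of objects; on the
      block \<open>T_e \<inter> S_f\<close> with base point \<open>p\<close>, the \<open>(a, b)\<close>-entry of \<open>X\<close> is
      \<open>\<beta>\<^bsub>p a\<^sup>-\<^sup>1\<^esub>(X b (a b\<^sup>-\<^sup>1)) \<in> E e\<close>.  The product formula becomes matrix multiplication and
      the identity \<open>\<Sum> 1_e \<delta>_e # v_g\<close> becomes the identity matrix.
  (3) Enumerating each block by \<open>{0..<n\<^sub>e\<^sub>f}\<close> gives a bijection \<open>to_matrix\<close> onto
      \<open>\<Oplus> M\<^sub>n\<^sub>e\<^sub>f(E_e)\<close> preserving all operations; the unit laws of \<open>B_0\<close> are then
      transported from those of the matrix algebra.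
\<close>

lemma sum_eq_single:
  assumes "finite A" "a \<in> A" "\<And>x. x \<in> A \<Longrightarrow> x \<noteq> a \<Longrightarrow> g x = 0"
  shows "sum g A = g a"
proof -
  have "sum g A = g a + sum g (A - {a})" using sum.remove[OF assms(1,2)] by simp
  also have "sum g (A - {a}) = 0" using assms(3) by (intro sum.neutral) auto
  finally show ?thesis by simp
qed

locale groupoid_ops =
  fixes G :: "'g set" and mult :: "'g \<Rightarrow> 'g \<Rightarrow> 'g" and gi :: "'g \<Rightarrow> 'g"
  assumes groupoid: "groupoid G mult gi"
begin

abbreviation "d \<equiv> gd mult gi"
abbreviation "r \<equiv> gr mult gi"
abbreviation "G0 \<equiv> objects G mult gi"
abbreviation "hom e f \<equiv> Tset G mult gi e \<inter> Sset G mult gi f"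

lemma inv_closed [simp]: "g \<in> G \<Longrightarrow> gi g \<in> G"
  using groupoid unfolding groupoid_def by blast
lemma d_inv [simp]: "g \<in> G \<Longrightarrow> d (gi g) = r g"
  using groupoid unfolding groupoid_def by blast
lemma r_inv [simp]: "g \<in> G \<Longrightarrow> r (gi g) = d g"
  using groupoid unfolding groupoid_def by blast
lemma mult_closed [simp]: "g \<in> G \<Longrightarrow> h \<in> G \<Longrightarrow> d g = r h \<Longrightarrow> mult g h \<in> G"
  using groupoid unfolding groupoid_def by blast
lemma d_mult [simp]: "g \<in> G \<Longrightarrow> h \<in> G \<Longrightarrow> d g = r h \<Longrightarrow> d (mult g h) = d h"
  using groupoid unfolding groupoid_def by blast
lemma r_mult [simp]: "g \<in> G \<Longrightarrow> h \<in> G \<Longrightarrow> d g = r h \<Longrightarrow> r (mult g h) = r g"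
  using groupoid unfolding groupoid_def by blast
lemma assoc:
  "g \<in> G \<Longrightarrow> h \<in> G \<Longrightarrow> l \<in> G \<Longrightarrow> d g = r h \<Longrightarrow> d h = r l \<Longrightarrow>
   mult (mult g h) l = mult g (mult h l)"
  using groupoid unfolding groupoid_def by blast
lemma r_unit [simp]: "g \<in> G \<Longrightarrow> mult (r g) g = g"
  using groupoid unfolding groupoid_def by blast
lemma d_unit [simp]: "g \<in> G \<Longrightarrow> mult g (d g) = g"
  using groupoid unfolding groupoid_def by blast

lemma d_eq: "d g = mult (gi g) g" by (simp add: gd_def)
lemma r_eq: "r g = mult g (gi g)" by (simp add: gr_def)

lemma d_closed [simp]: "g \<in> G \<Longrightarrow> d g \<in> G" unfolding d_eq by simp
lemma r_closed [simp]: "g \<in> G \<Longrightarrow> r g \<in> G" unfolding r_eq by simp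

lemma d_d [simp]: "g \<in> G \<Longrightarrow> d (d g) = d g"
  using d_mult[of "gi g" g] by (simp flip: d_eq)
lemma r_d [simp]: "g \<in> G \<Longrightarrow> r (d g) = d g"
  using r_mult[of "gi g" g] by (simp flip: d_eq)
lemma r_r [simp]: "g \<in> G \<Longrightarrow> r (r g) = r g"
  using r_mult[of g "gi g"] by (simp flip: r_eq)
lemma d_r [simp]: "g \<in> G \<Longrightarrow> d (r g) = r g"
  using d_mult[of g "gi g"] by (simp flip: r_eq)

lemma d_obj [simp]: "g \<in> G \<Longrightarrow> d g \<in> G0" unfolding objects_def by blast
lemma r_obj [simp]: "g \<in> G \<Longrightarrow> r g \<in> G0"
  using d_obj[of "gi g"] by simp
lemma obj_closed: "e \<in> G0 \<Longrightarrow> e \<in> G" unfolding objects_def by auto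
lemma obj_d: "e \<in> G0 \<Longrightarrow> d e = e" unfolding objects_def by auto
lemma obj_r: "e \<in> G0 \<Longrightarrow> r e = e" unfolding objects_def by auto

lemma hom_iff: "k \<in> hom e f \<longleftrightarrow> k \<in> G \<and> r k = e \<and> d k = f"
  unfolding Tset_def Sset_def by auto

lemma mult_mult_inv: "a \<in> G \<Longrightarrow> b \<in> G \<Longrightarrow> d a = r b \<Longrightarrow> mult (mult a b) (gi b) = a"
  using assoc[of a b "gi b"] d_unit[of a] by (simp flip: r_eq)

lemma mult_inv_mult: "a \<in> G \<Longrightarrow> b \<in> G \<Longrightarrow> d a = d b \<Longrightarrow> mult (mult a (gi b)) b = a"
  using assoc[of a "gi b" b] d_unit[of a] by (simp flip: d_eq)

lemma mult_inv_cancel_mid: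
  "x \<in> G \<Longrightarrow> a \<in> G \<Longrightarrow> y \<in> G \<Longrightarrow> d x = d a \<Longrightarrow> d a = r y \<Longrightarrow>
   mult (mult x (gi a)) (mult a y) = mult x y"
  using assoc[of "mult x (gi a)" a y] mult_inv_mult[of x a] by simp

lemma right_cancel:
  "a \<in> G \<Longrightarrow> a' \<in> G \<Longrightarrow> b \<in> G \<Longrightarrow> d a = r b \<Longrightarrow> d a' = r b \<Longrightarrow>
   mult a b = mult a' b \<Longrightarrow> a = a'"
  by (metis mult_mult_inv)

lemma hom_loop:
  assumes "a \<in> hom e f" "b \<in> hom e f"
  shows "mult a (gi b) \<in> G" "d (mult a (gi b)) = e" "r (mult a (gi b)) = e"
  using assms unfolding hom_iff by auto

end

locale groupoid_ring_action = groupoid_ops G mult gi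
  for G :: "'g set" and mult :: "'g \<Rightarrow> 'g \<Rightarrow> 'g" and gi :: "'g \<Rightarrow> 'g" +
  fixes smul :: "'k::comm_ring_1 \<Rightarrow> 'r::ring \<Rightarrow> 'r"
    and E :: "'g \<Rightarrow> 'r set" and \<beta> :: "'g \<Rightarrow> 'r \<Rightarrow> 'r"
  assumes action: "groupoid_action G mult gi smul E \<beta>"
begin

lemma E_r: "g \<in> G \<Longrightarrow> E g = E (r g)"
  using action unfolding groupoid_action_def by blast

lemma E_inv: "g \<in> G \<Longrightarrow> E (gi g) = E (d g)"
  using E_r[of "gi g"] by simp

lemma ideal: "e \<in> G0 \<Longrightarrow> is_ideal (E e)"
  using action unfolding groupoid_action_def by blast
lemma zero_E [simp]: "e \<in> G0 \<Longrightarrow> 0 \<in> E e"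
  using ideal unfolding is_ideal_def by blast
lemma add_E: "e \<in> G0 \<Longrightarrow> x \<in> E e \<Longrightarrow> y \<in> E e \<Longrightarrow> x + y \<in> E e"
  using ideal[unfolded is_ideal_def] by (metis diff_0 diff_minus_eq_add)
lemma mult_left_E: "e \<in> G0 \<Longrightarrow> x \<in> E e \<Longrightarrow> x * y \<in> E e"
  using ideal unfolding is_ideal_def by blast
lemma mult_right_E: "e \<in> G0 \<Longrightarrow> y \<in> E e \<Longrightarrow> x * y \<in> E e"
  using ideal unfolding is_ideal_def by blast
lemma sum_E: "e \<in> G0 \<Longrightarrow> (\<And>s. s \<in> S \<Longrightarrow> F s \<in> E e) \<Longrightarrow> sum F S \<in> E e"
  by (induction S rule: infinite_finite_induct) (simp_all add: add_E)

lemma beta_iso: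
  assumes "g \<in> G"
  shows "bij_betw (\<beta> g) (E (d g)) (E (r g))"
    and "\<And>x y. x \<in> E (d g) \<Longrightarrow> y \<in> E (d g) \<Longrightarrow> \<beta> g (x + y) = \<beta> g x + \<beta> g y"
    and "\<And>x y. x \<in> E (d g) \<Longrightarrow> y \<in> E (d g) \<Longrightarrow> \<beta> g (x * y) = \<beta> g x * \<beta> g y"
    and "\<And>a x. x \<in> E (d g) \<Longrightarrow> \<beta> g (smul a x) = smul a (\<beta> g x)"
proof -
  have "bij_betw (\<beta> g) (E (gi g)) (E g) \<and>
        (\<forall>x\<in>E (gi g). \<forall>y\<in>E (gi g). \<beta> g (x + y) = \<beta> g x + \<beta> g y \<and> \<beta> g (x * y) = \<beta> g x * \<beta> g y) \<and>
        (\<forall>a. \<forall>x\<in>E (gi g). \<beta> g (smul a x) = smul a (\<beta> g x))"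
    using action assms unfolding groupoid_action_def by blast
  then show "bij_betw (\<beta> g) (E (d g)) (E (r g))"
    and "\<And>x y. x \<in> E (d g) \<Longrightarrow> y \<in> E (d g) \<Longrightarrow> \<beta> g (x + y) = \<beta> g x + \<beta> g y"
    and "\<And>x y. x \<in> E (d g) \<Longrightarrow> y \<in> E (d g) \<Longrightarrow> \<beta> g (x * y) = \<beta> g x * \<beta> g y"
    and "\<And>a x. x \<in> E (d g) \<Longrightarrow> \<beta> g (smul a x) = smul a (\<beta> g x)"
    using E_inv[OF assms] E_r[OF assms] by simp_all
qed

lemmas beta_bij = beta_iso(1) and beta_add = beta_iso(2) and beta_mult = beta_iso(3)
  and beta_smul = beta_iso(4)

lemma beta_mem: "g \<in> G \<Longrightarrow> x \<in> E (d g) \<Longrightarrow> \<beta> g x \<in> E (r g)"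
  using beta_bij bij_betwE by blast
lemma beta_obj: "e \<in> G0 \<Longrightarrow> x \<in> E e \<Longrightarrow> \<beta> e x = x"
  using action unfolding groupoid_action_def by blast
lemma beta_comp:
  assumes "g \<in> G" "h \<in> G" "d g = r h" "x \<in> E (d h)"
  shows "\<beta> g (\<beta> h x) = \<beta> (mult g h) x"
proof -
  have "\<forall>x\<in>E (gi h). \<beta> g (\<beta> h x) = \<beta> (mult g h) x"
    using action assms(1-3) unfolding groupoid_action_def by blast
  then show ?thesis using E_inv[OF assms(2)] assms(4) by blast
qed

lemma beta_zero [simp]: "g \<in> G \<Longrightarrow> \<beta> g 0 = 0"
  using beta_add[of g 0 0] by simp

lemma beta_sum:
  "g \<in> G \<Longrightarrow> (\<And>s. s \<in> S \<Longrightarrow> F s \<in> E (d g)) \<Longrightarrow> \<beta> g (sum F S) = (\<Sum>s\<in>S. \<beta> g (F s))"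
  by (induction S rule: infinite_finite_induct) (simp_all add: beta_add sum_E)

lemma beta_inv_left: "u \<in> G \<Longrightarrow> x \<in> E (d u) \<Longrightarrow> \<beta> (gi u) (\<beta> u x) = x"
  using beta_comp[of "gi u" u x] beta_obj[of "d u" x] by (simp flip: d_eq)

lemma beta_inv_right: "u \<in> G \<Longrightarrow> y \<in> E (r u) \<Longrightarrow> \<beta> u (\<beta> (gi u) y) = y"
  using beta_comp[of u "gi u" y] beta_obj[of "r u" y] by (simp flip: r_eq)

lemma skew_mult_hcomp:
  assumes "finite G" "n \<in> G"
  shows "skew_mult G mult gi \<beta> x (hcomp n y) m =
           (\<Sum>g\<in>{g\<in>G. d g = r n \<and> mult g n = m}. x g * \<beta> g (y n))"
proof -
  let ?P = "{(g, h). g \<in> G \<and> h \<in> G \<and> d g = r h \<and> mult g h = m}"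
  let ?F = "\<lambda>(g, h). x g * \<beta> g (hcomp n y h)"
  let ?C = "{g\<in>G. d g = r n \<and> mult g n = m}"
  have "finite ?P"
    by (rule finite_subset[of _ "G \<times> G"]) (auto simp: assms(1))
  have "skew_mult G mult gi \<beta> x (hcomp n y) m = sum ?F ?P"
    unfolding skew_mult_def by simp
  also have "\<dots> = sum ?F ((\<lambda>g. (g, n)) ` ?C)"
    using \<open>finite ?P\<close> by (rule sum.mono_neutral_right) (auto simp: hcomp_def assms(2))
  also have "\<dots> = (\<Sum>g\<in>?C. x g * \<beta> g (y n))"
    by (subst sum.reindex) (auto simp: inj_on_def hcomp_def)
  finally show ?thesis .
qed

end

locale B0_setting = groupoid_ring_action G mult gi smul E \<beta>
  for G :: "'g set" and mult :: "'g \<Rightarrow> 'g \<Rightarrow> 'g" and gi :: "'g \<Rightarrow> 'g"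
    and smul :: "'k::comm_ring_1 \<Rightarrow> 'r::ring \<Rightarrow> 'r"
    and E :: "'g \<Rightarrow> 'r set" and \<beta> :: "'g \<Rightarrow> 'r \<Rightarrow> 'r" +
  fixes one :: "'g \<Rightarrow> 'r"
  assumes finite: "finite G"
    and kalgebra: "kalgebra smul"
    and units: "local_units G mult gi E one"
begin

abbreviation "B0 \<equiv> B0_carrier G mult gi E"
abbreviation "one0 \<equiv> B0_one G mult gi one"
abbreviation "smm \<equiv> smash_mult G mult gi \<beta>"

lemma one_E: "e \<in> G0 \<Longrightarrow> one e \<in> E e"
  using units unfolding local_units_def by blast
lemma one_left: "e \<in> G0 \<Longrightarrow> x \<in> E e \<Longrightarrow> one e * x = x"
  using units unfolding local_units_def by blast
lemma one_right: "e \<in> G0 \<Longrightarrow> x \<in> E e \<Longrightarrow> x * one e = x"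
  using units unfolding local_units_def by blast

lemma smul_zero [simp]: "smul a 0 = 0"
  using kalgebra unfolding kalgebra_def by (metis add_cancel_right_right add_0)

text \<open>Scalar multiples stay in \<open>E e\<close>, because \<open>smul a x = smul a (one e) * x\<close>.\<close>
lemma smul_E: "e \<in> G0 \<Longrightarrow> x \<in> E e \<Longrightarrow> smul a x \<in> E e"
  using kalgebra one_left[of e x] mult_right_E[of e x "smul a (one e)"]
  unfolding kalgebra_def by metis

text \<open>A loop \<open>g\<close> at \<open>e\<close> acts as a ring automorphism of \<open>E e\<close>, hence fixes its identity.\<close>
lemma beta_one:
  assumes g: "g \<in> G" and loop: "d g = r g"
  shows "\<beta> g (one (r g)) = one (r g)"
proof -
  let ?e = "r g"
  have e: "?e \<in> G0" using g by simp
  have o: "one ?e \<in> E (d g)" using one_E[OF e] loop by simp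
  obtain x where x: "x \<in> E (d g)" "\<beta> g x = one ?e"
    using beta_bij[OF g] one_E[OF e] by (metis bij_betw_iff_bijections)
  have "\<beta> g (one ?e) * one ?e = \<beta> g (one ?e * x)"
    using beta_mult[OF g o x(1)] x(2) by simp
  also have "one ?e * x = x" using one_left[OF e] x(1) loop by simp
  finally have "\<beta> g (one ?e) * one ?e = one ?e" using x(2) by simp
  then show ?thesis using one_right[OF e beta_mem[OF g o]] by simp
qed

text \<open>\<open>B0_supp l g\<close> says that \<open>E_g \<delta>\<^sub>g # v\<^sub>l\<close> is a summand of \<open>B_0\<close>, i.e. \<open>d g = r g = r l\<close>;
  the coefficient of an element of \<open>B_0\<close> at \<open>(l, g)\<close> then lies in \<open>E (r l)\<close>.\<close>
definition B0_supp :: "'g \<Rightarrow> 'g \<Rightarrow> bool" where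
  "B0_supp l g \<longleftrightarrow> l \<in> G \<and> g \<in> G \<and> d g = r g \<and> r g = r l"

lemma B0_iff: "X \<in> B0 \<longleftrightarrow> (\<forall>l g. if B0_supp l g then X l g \<in> E (r l) else X l g = 0)"
proof
  assume X: "X \<in> B0"
  show "\<forall>l g. if B0_supp l g then X l g \<in> E (r l) else X l g = 0"
  proof (intro allI)
    fix l g
    show "if B0_supp l g then X l g \<in> E (r l) else X l g = 0"
    proof (cases "l \<in> G \<and> g \<in> G")
      case False
      then show ?thesis
        using X unfolding B0_carrier_def smash_carrier_def skew_carrier_def B0_supp_def by auto
    next
      case True
      then have "X l g \<in> E g"
        using X unfolding B0_carrier_def smash_carrier_def skew_carrier_def by auto
      then show ?thesis
        using True X E_r[of g] unfolding B0_carrier_def B0_supp_def by auto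
    qed
  qed
next
  assume H: "\<forall>l g. if B0_supp l g then X l g \<in> E (r l) else X l g = 0"
  then have zero: "\<And>l g. \<not> B0_supp l g \<Longrightarrow> X l g = 0"
    and mem: "\<And>l g. B0_supp l g \<Longrightarrow> X l g \<in> E g"
    using E_r unfolding B0_supp_def by metis+
  have "X l g \<in> E g" if "g \<in> G" for l g
    using zero[of l g] mem[of l g] zero_E[of "r g"] E_r[OF that] that by (cases "B0_supp l g") auto
  then show "X \<in> B0"
    using zero unfolding B0_carrier_def smash_carrier_def skew_carrier_def B0_supp_def by auto
qed

lemma B0_mem: "X \<in> B0 \<Longrightarrow> B0_supp l g \<Longrightarrow> X l g \<in> E (r l)"
  using B0_iff by metis
lemma B0_zero: "X \<in> B0 \<Longrightarrow> \<not> B0_supp l g \<Longrightarrow> X l g = 0"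
  using B0_iff by metis
lemma B0_mem_any: "X \<in> B0 \<Longrightarrow> l \<in> G \<Longrightarrow> X l g \<in> E (r l)"
  by (cases "B0_supp l g") (auto simp: B0_mem B0_zero)

text \<open>The summand of a product in \<open>B_0\<close> coming from the factor \<open>v\<^sub>k\<close> of the left operand:
  it is non-zero only if \<open>m\<close> lies in the support and \<open>k\<close> has the same range as \<open>l\<close>,
  and then it comes from the single factorisation \<open>m = (m l k\<^sup>-\<^sup>1) (k l\<^sup>-\<^sup>1)\<close>.\<close>
lemma B0_mult_summand:
  assumes X: "X \<in> B0" and Y: "Y \<in> B0" and l: "l \<in> G" and k: "k \<in> G" and kl: "d k = d l"
  shows "skew_mult G mult gi \<beta> (X k) (hcomp (mult k (gi l)) (Y l)) m =
    (if B0_supp l m \<and> r k = r l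
     then X k (mult (mult m l) (gi k)) * \<beta> (mult (mult m l) (gi k)) (Y l (mult k (gi l))) else 0)"
proof -
  let ?n = "mult k (gi l)"
  let ?C = "{g\<in>G. d g = r ?n \<and> mult g ?n = m}"
  have n: "?n \<in> G" "d ?n = r l" "r ?n = r k" using k l kl by simp_all
  have sm: "skew_mult G mult gi \<beta> (X k) (hcomp ?n (Y l)) m = (\<Sum>g\<in>?C. X k g * \<beta> g (Y l ?n))"
    using skew_mult_hcomp[OF finite n(1)] .
  show ?thesis
  proof (cases "B0_supp l m \<and> r k = r l")
    case True
    let ?g0 = "mult (mult m l) (gi k)"
    have m: "m \<in> G" "d m = r l" "r m = r l" using True unfolding B0_supp_def by auto
    have g0: "?g0 \<in> G" "d ?g0 = r ?n" "mult ?g0 ?n = m"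
      using m l k kl n mult_inv_cancel_mid[of "mult m l" k "gi l"] mult_mult_inv[of m l] by simp_all
    have "g = ?g0" if "g \<in> G" "d g = r ?n" "mult g ?n = m" for g
      using right_cancel[OF that(1) g0(1) n(1) that(2) g0(2)] that(3) g0(3) by argo
    then have "?C = {?g0}" using g0 by blast
    then show ?thesis using sm True by simp
  next
    case False
    have "X k g * \<beta> g (Y l ?n) = 0" if "g \<in> G" "d g = r ?n" "mult g ?n = m" for g
    proof (rule ccontr)
      assume "X k g * \<beta> g (Y l ?n) \<noteq> 0"
      then have "X k g \<noteq> 0" and "Y l ?n \<noteq> 0" using that(1) by auto
      then have "B0_supp k g" and "B0_supp l ?n" using B0_zero X Y by blast+
      then have "r g = r k" "r ?n = r l" unfolding B0_supp_def by auto
      have "m \<in> G" using mult_closed[OF that(1) n(1) that(2)] that(3) by argo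
      moreover have "d m = r l" using d_mult[OF that(1) n(1) that(2)] that(3) n(2) by argo
      moreover have "r m = r l"
        using r_mult[OF that(1) n(1) that(2)] that(3) n(3) \<open>r g = r k\<close> \<open>r ?n = r l\<close> by argo
      ultimately have "B0_supp l m \<and> r k = r l"
        using l n(3) \<open>r ?n = r l\<close> unfolding B0_supp_def by argo
      then show False using False by blast
    qed
    then have "(\<Sum>g\<in>?C. X k g * \<beta> g (Y l ?n)) = 0" by (intro sum.neutral) blast
    then show ?thesis using sm by (simp only: if_not_P[OF False])
  qed
qed

lemma B0_mult_apply:
  assumes X: "X \<in> B0" and Y: "Y \<in> B0"
  shows "smm X Y l m = (if B0_supp l m then (\<Sum>k\<in>hom (r l) (d l).
      X k (mult (mult m l) (gi k)) * \<beta> (mult (mult m l) (gi k)) (Y l (mult k (gi l)))) else 0)"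
proof (cases "l \<in> G")
  case False
  then show ?thesis unfolding smash_mult_def B0_supp_def by simp
next
  case l: True
  let ?K = "{k \<in> G. d k = d l}"
  let ?T = "\<lambda>k. X k (mult (mult m l) (gi k)) * \<beta> (mult (mult m l) (gi k)) (Y l (mult k (gi l)))"
  have "smm X Y l m = (\<Sum>k\<in>?K. skew_mult G mult gi \<beta> (X k) (hcomp (mult k (gi l)) (Y l)) m)"
    unfolding smash_mult_def using l by simp
  also have "\<dots> = (\<Sum>k\<in>?K. if B0_supp l m \<and> r k = r l then ?T k else 0)"
    using B0_mult_summand[OF X Y l] by (intro sum.cong) auto
  also have "\<dots> = (if B0_supp l m then (\<Sum>k\<in>?K. if r k = r l then ?T k else 0) else 0)"
    by simp
  also have "(\<Sum>k\<in>?K. if r k = r l then ?T k else 0) = sum ?T {k\<in>?K. r k = r l}"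
    using sum.inter_filter[of ?K ?T "\<lambda>k. r k = r l"] finite by simp
  also have "{k\<in>?K. r k = r l} = hom (r l) (d l)" unfolding Tset_def Sset_def by auto
  finally show ?thesis .
qed

lemma zero_B0: "(\<lambda>h g. 0) \<in> B0"
  unfolding B0_iff by (simp add: B0_supp_def)

lemma add_B0:
  assumes X: "X \<in> B0" and Y: "Y \<in> B0"
  shows "(\<lambda>h g. X h g + Y h g) \<in> B0"
  unfolding B0_iff
proof (intro allI)
  fix l g
  show "if B0_supp l g then X l g + Y l g \<in> E (r l) else X l g + Y l g = 0"
    using B0_mem[OF X] B0_mem[OF Y] B0_zero[OF X] B0_zero[OF Y] add_E[of "r l"]
    by (auto simp: B0_supp_def)
qed

lemma smul_B0:
  assumes X: "X \<in> B0"
  shows "(\<lambda>h g. smul a (X h g)) \<in> B0"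
  unfolding B0_iff
proof (intro allI)
  fix l g
  show "if B0_supp l g then smul a (X l g) \<in> E (r l) else smul a (X l g) = 0"
    using B0_mem[OF X] B0_zero[OF X] smul_E[of "r l"] by (auto simp: B0_supp_def)
qed

lemma mult_B0:
  assumes X: "X \<in> B0" and Y: "Y \<in> B0"
  shows "smm X Y \<in> B0"
  unfolding B0_iff
proof (intro allI)
  fix l m
  have "(\<Sum>k\<in>hom (r l) (d l).
      X k (mult (mult m l) (gi k)) * \<beta> (mult (mult m l) (gi k)) (Y l (mult k (gi l)))) \<in> E (r l)"
    if "l \<in> G"
  proof (rule sum_E)
    show "r l \<in> G0" using that by simp
    fix k assume "k \<in> hom (r l) (d l)"
    then show "X k (mult (mult m l) (gi k)) * \<beta> (mult (mult m l) (gi k)) (Y l (mult k (gi l))) \<in> E (r l)"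
      using B0_mem_any[OF X, of k] mult_left_E[of "r l"] that unfolding hom_iff by auto
  qed
  then show "if B0_supp l m then smm X Y l m \<in> E (r l) else smm X Y l m = 0"
    using B0_mult_apply[OF X Y] by (simp add: B0_supp_def)
qed

lemma one_B0: "one0 \<in> B0"
  unfolding B0_iff
proof (intro allI)
  fix l g
  have "l \<in> G \<and> g \<in> G0 \<and> r l = g \<longleftrightarrow> B0_supp l g \<and> g = r l"
    unfolding B0_supp_def using obj_closed obj_d obj_r by auto
  then show "if B0_supp l g then one0 l g \<in> E (r l) else one0 l g = 0"
    using one_E[of "r l"] zero_E[of "r l"] unfolding B0_one_def B0_supp_def by auto
qed

lemma hom_B0_supp:
  assumes "a \<in> hom e f" "b \<in> hom e f"
  shows "B0_supp b (mult a (gi b))" and "mult (mult a (gi b)) b = a"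
  using assms hom_loop[OF assms] mult_inv_mult[of a b] unfolding hom_iff B0_supp_def by auto

text \<open>Matrix coordinates of an element of \<open>B_0\<close> on the block \<open>T_e \<inter> S_f\<close>, relative to a base
  point \<open>p\<close> of that block: the \<open>(a, b)\<close>-entry is the coefficient of \<open>\<delta>\<^bsub>a b\<^sup>-\<^sup>1\<^esub> # v\<^sub>b\<close>,
  transported into \<open>E e\<close> along the loop \<open>p a\<^sup>-\<^sup>1\<close>.\<close>
definition mat_coord :: "'g \<Rightarrow> ('g \<Rightarrow> 'g \<Rightarrow> 'r) \<Rightarrow> 'g \<Rightarrow> 'g \<Rightarrow> 'r" where
  "mat_coord p X a b = \<beta> (mult p (gi a)) (X b (mult a (gi b)))"

lemma mat_coord_mem:
  assumes X: "X \<in> B0" and hom: "p \<in> hom e f" "a \<in> hom e f" "b \<in> hom e f"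
  shows "mat_coord p X a b \<in> E e"
  using beta_mem[of "mult p (gi a)"] B0_mem_any[OF X, of b] hom_loop[OF hom(1,2)] hom(3)
  unfolding mat_coord_def hom_iff by auto

lemma mat_coord_add:
  assumes X: "X \<in> B0" and Y: "Y \<in> B0" and hom: "p \<in> hom e f" "a \<in> hom e f" "b \<in> hom e f"
  shows "mat_coord p (\<lambda>h g. X h g + Y h g) a b = mat_coord p X a b + mat_coord p Y a b"
  using beta_add[of "mult p (gi a)"] B0_mem_any[OF X, of b] B0_mem_any[OF Y, of b]
    hom_loop[OF hom(1,2)] hom(3)
  unfolding mat_coord_def hom_iff by auto

lemma mat_coord_smul:
  assumes X: "X \<in> B0" and hom: "p \<in> hom e f" "a \<in> hom e f" "b \<in> hom e f"
  shows "mat_coord p (\<lambda>h g. smul c (X h g)) a b = smul c (mat_coord p X a b)"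
  using beta_smul[of "mult p (gi a)"] B0_mem_any[OF X, of b] hom_loop[OF hom(1,2)] hom(3)
  unfolding mat_coord_def hom_iff by auto

lemma mat_coord_one:
  assumes hom: "p \<in> hom e f" "a \<in> hom e f" "b \<in> hom e f"
  shows "mat_coord p one0 a b = (if a = b then one e else 0)"
proof (cases "a = b")
  case True
  have a: "a \<in> G" "r a = e" using hom(2) unfolding hom_iff by auto
  then have "mult a (gi a) = e" "e \<in> G0" by (auto simp flip: r_eq)
  then have "one0 a (mult a (gi a)) = one e" unfolding B0_one_def using a by simp
  moreover have "\<beta> (mult p (gi a)) (one e) = one e"
    using beta_one[of "mult p (gi a)"] hom_loop[OF hom(1,2)] by simp
  ultimately show ?thesis using True unfolding mat_coord_def by simp
next
  case False
  have "r b \<noteq> mult a (gi b)"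
  proof
    assume "r b = mult a (gi b)"
    then have "mult (r b) b = a" using hom_B0_supp(2)[OF hom(2,3)] by simp
    then show False using False hom(3) r_unit[of b] unfolding hom_iff by argo
  qed
  then show ?thesis
    using False hom_loop[OF hom(1,2)] unfolding mat_coord_def B0_one_def by auto
qed

lemma mat_coord_mult:
  assumes X: "X \<in> B0" and Y: "Y \<in> B0" and hom: "p \<in> hom e f" "a \<in> hom e f" "b \<in> hom e f"
  shows "mat_coord p (smm X Y) a b = (\<Sum>k\<in>hom e f. mat_coord p X a k * mat_coord p Y k b)"
proof -
  let ?u = "mult p (gi a)"
  let ?x = "\<lambda>k. X k (mult a (gi k))"
  let ?y = "\<lambda>k. \<beta> (mult a (gi k)) (Y b (mult k (gi b)))"
  have u: "?u \<in> G" "d ?u = e" "r ?u = e" using hom_loop[OF hom(1,2)] .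
  have b: "b \<in> G" "r b = e" "d b = f" using hom(3) unfolding hom_iff by auto
  have xy: "?x k \<in> E e" "?y k \<in> E e" if k: "k \<in> hom e f" for k
  proof -
    have "Y b (mult k (gi b)) \<in> E e" using B0_mem_any[OF Y b(1)] b(2) by simp
    then show "?y k \<in> E e" using beta_mem[of "mult a (gi k)"] hom_loop[OF hom(2) k] by auto
    show "?x k \<in> E e" using B0_mem_any[OF X, of k] k unfolding hom_iff by auto
  qed
  have "smm X Y b (mult a (gi b)) = (\<Sum>k\<in>hom e f. ?x k * ?y k)"
    using B0_mult_apply[OF X Y] hom_B0_supp[OF hom(2,3)] b by simp
  moreover have "\<beta> ?u (\<Sum>k\<in>hom e f. ?x k * ?y k) = (\<Sum>k\<in>hom e f. \<beta> ?u (?x k * ?y k))"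
    using u xy mult_left_E[OF r_obj[OF u(1)]] by (intro beta_sum) auto
  ultimately have "mat_coord p (smm X Y) a b = (\<Sum>k\<in>hom e f. \<beta> ?u (?x k * ?y k))"
    unfolding mat_coord_def by simp
  also have "\<dots> = (\<Sum>k\<in>hom e f. \<beta> ?u (?x k) * \<beta> ?u (?y k))"
    using u xy by (intro sum.cong) (simp_all add: beta_mult)
  also have "\<dots> = (\<Sum>k\<in>hom e f. mat_coord p X a k * mat_coord p Y k b)"
  proof (rule sum.cong[OF refl])
    fix k assume k: "k \<in> hom e f"
    have "\<beta> ?u (?y k) = \<beta> (mult ?u (mult a (gi k))) (Y b (mult k (gi b)))"
      using beta_comp[of ?u "mult a (gi k)"] u hom_loop[OF hom(2) k] B0_mem_any[OF Y b(1)] b(2)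
      by simp
    also have "mult ?u (mult a (gi k)) = mult p (gi k)"
      using mult_inv_cancel_mid[of p a "gi k"] hom k unfolding hom_iff by auto
    finally show "\<beta> ?u (?x k) * \<beta> ?u (?y k) = mat_coord p X a k * mat_coord p Y k b"
      unfolding mat_coord_def by simp
  qed
  finally show ?thesis .
qed

abbreviation "N \<equiv> nsize G mult gi"
abbreviation "MI \<equiv> mat_index G mult gi"

lemma MI_iff: "(e, f) \<in> MI \<longleftrightarrow> e \<in> G0 \<and> f \<in> G0 \<and> hom e f \<noteq> {}"
  unfolding mat_index_def by simp

lemma hom_finite: "finite (hom e f)"
  using finite unfolding Tset_def by auto

lemma MI_pos: "(e, f) \<in> MI \<Longrightarrow> 0 < N e f"
  unfolding MI_iff nsize_def using hom_finite card_gt_0_iff by blast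

lemma mat_carrier_iff: "M \<in> mat_carrier G mult gi E \<longleftrightarrow> (\<forall>e f i j.
    if (e, f) \<in> MI \<and> i < N e f \<and> j < N e f then M e f i j \<in> E e else M e f i j = 0)"
  unfolding mat_carrier_def by simp

lemma mat_carrier_mem:
  assumes "M \<in> mat_carrier G mult gi E" and "(e, f) \<in> MI \<and> i < N e f \<and> j < N e f"
  shows "M e f i j \<in> E e"
proof -
  have "if (e, f) \<in> MI \<and> i < N e f \<and> j < N e f then M e f i j \<in> E e else M e f i j = 0"
    using assms(1) unfolding mat_carrier_iff by (elim allE) assumption
  then show ?thesis using assms(2) by simp
qed

lemma mat_carrier_zero:
  assumes "M \<in> mat_carrier G mult gi E" and "\<not> ((e, f) \<in> MI \<and> i < N e f \<and> j < N e f)"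
  shows "M e f i j = 0"
proof -
  have "if (e, f) \<in> MI \<and> i < N e f \<and> j < N e f then M e f i j \<in> E e else M e f i j = 0"
    using assms(1) unfolding mat_carrier_iff by (elim allE) assumption
  then show ?thesis unfolding if_not_P[OF assms(2)] .
qed

definition idx :: "'g \<Rightarrow> 'g \<Rightarrow> nat \<Rightarrow> 'g" where
  "idx e f = (SOME h. bij_betw h {0..<N e f} (hom e f))"

definition idx_inv :: "'g \<Rightarrow> 'g \<Rightarrow> 'g \<Rightarrow> nat" where
  "idx_inv e f = inv_into {0..<N e f} (idx e f)"

lemma idx_bij: "bij_betw (idx e f) {0..<N e f} (hom e f)"
proof -
  have "\<exists>h. bij_betw h {0..<N e f} (hom e f)"
    unfolding nsize_def using ex_bij_betw_nat_finite[OF hom_finite] .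
  then show ?thesis unfolding idx_def by (rule someI_ex)
qed

lemma idx_in: "i < N e f \<Longrightarrow> idx e f i \<in> hom e f"
  using idx_bij bij_betwE by fastforce
lemma idx_inv_less: "a \<in> hom e f \<Longrightarrow> idx_inv e f a < N e f"
  unfolding idx_inv_def using idx_bij bij_betw_inv_into bij_betwE by fastforce
lemma idx_idx_inv: "a \<in> hom e f \<Longrightarrow> idx e f (idx_inv e f a) = a"
  unfolding idx_inv_def using idx_bij bij_betw_inv_into_right by fastforce
lemma idx_inv_idx: "i < N e f \<Longrightarrow> idx_inv e f (idx e f i) = i"
  unfolding idx_inv_def using idx_bij bij_betw_inv_into_left by fastforce

text \<open>The isomorphism \<open>B_0 \<rightarrow> \<Oplus> M\<^sub>n\<^sub>e\<^sub>f(E_e)\<close> takes matrix coordinates blockwise, with the first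
  element of each block as base point; \<open>of_matrix\<close> is its inverse.\<close>
definition to_matrix :: "('g \<Rightarrow> 'g \<Rightarrow> 'r) \<Rightarrow> 'g \<Rightarrow> 'g \<Rightarrow> nat \<Rightarrow> nat \<Rightarrow> 'r" where
  "to_matrix X = (\<lambda>e f i j. if (e, f) \<in> MI \<and> i < N e f \<and> j < N e f
     then mat_coord (idx e f 0) X (idx e f i) (idx e f j) else 0)"

definition of_matrix :: "('g \<Rightarrow> 'g \<Rightarrow> nat \<Rightarrow> nat \<Rightarrow> 'r) \<Rightarrow> 'g \<Rightarrow> 'g \<Rightarrow> 'r" where
  "of_matrix M = (\<lambda>l g. if B0_supp l g
     then \<beta> (gi (mult (idx (r l) (d l) 0) (gi (mult g l))))
            (M (r l) (d l) (idx_inv (r l) (d l) (mult g l)) (idx_inv (r l) (d l) l))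
     else 0)"

text \<open>A support position \<open>(l, g)\<close> of \<open>B_0\<close> corresponds to the pair \<open>(g l, l)\<close> of the block of \<open>l\<close>.\<close>
lemma B0_supp_block:
  assumes "B0_supp l g"
  shows "(r l, d l) \<in> MI" "l \<in> hom (r l) (d l)" "mult g l \<in> hom (r l) (d l)"
    and "mult (mult g l) (gi l) = g"
proof -
  have l: "l \<in> G" and g: "g \<in> G" "d g = r l" "r g = r l"
    using assms unfolding B0_supp_def by auto
  then show "l \<in> hom (r l) (d l)" "mult g l \<in> hom (r l) (d l)"
    unfolding hom_iff by simp_all
  then show "(r l, d l) \<in> MI" using l unfolding MI_iff by auto
  show "mult (mult g l) (gi l) = g" using mult_mult_inv[OF g(1) l g(2)] .
qed

lemma block_members:
  assumes "(e, f) \<in> MI \<and> i < N e f \<and> j < N e f"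
  shows "idx e f 0 \<in> hom e f" "idx e f i \<in> hom e f" "idx e f j \<in> hom e f"
  using assms MI_pos idx_in by auto

lemma to_matrix_outside:
  "\<not> ((e, f) \<in> MI \<and> i < N e f \<and> j < N e f) \<Longrightarrow> to_matrix X e f i j = 0"
  unfolding to_matrix_def by auto

lemma to_matrix_mem:
  assumes X: "X \<in> B0"
  shows "to_matrix X \<in> mat_carrier G mult gi E"
  unfolding mat_carrier_iff
proof (intro allI)
  fix e f i j
  show "if (e, f) \<in> MI \<and> i < N e f \<and> j < N e f
        then to_matrix X e f i j \<in> E e else to_matrix X e f i j = 0"
  proof (cases "(e, f) \<in> MI \<and> i < N e f \<and> j < N e f")
    case True
    then show ?thesis using mat_coord_mem[OF X block_members[OF True]] unfolding to_matrix_def by simp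
  next
    case False
    then show ?thesis unfolding if_not_P[OF False] by (rule to_matrix_outside)
  qed
qed

lemma of_matrix_mem:
  assumes M: "M \<in> mat_carrier G mult gi E"
  shows "of_matrix M \<in> B0"
  unfolding B0_iff
proof (intro allI)
  fix l g
  show "if B0_supp l g then of_matrix M l g \<in> E (r l) else of_matrix M l g = 0"
  proof (cases "B0_supp l g")
    case True
    let ?e = "r l" and ?f = "d l"
    let ?u = "mult (idx ?e ?f 0) (gi (mult g l))"
    note block = B0_supp_block[OF True]
    have u: "?u \<in> G" "d ?u = ?e" "r ?u = ?e"
      using hom_loop[OF idx_in[OF MI_pos[OF block(1)]] block(3)] .
    have "M ?e ?f (idx_inv ?e ?f (mult g l)) (idx_inv ?e ?f l) \<in> E ?e"
      using M block idx_inv_less unfolding mat_carrier_iff by meson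
    then show ?thesis
      using True u beta_mem[of "gi ?u"] unfolding of_matrix_def by simp
  qed (simp add: of_matrix_def)
qed

lemma of_to_matrix:
  assumes X: "X \<in> B0"
  shows "of_matrix (to_matrix X) = X"
proof (intro ext)
  fix l g
  show "of_matrix (to_matrix X) l g = X l g"
  proof (cases "B0_supp l g")
    case True
    let ?e = "r l" and ?f = "d l"
    let ?u = "mult (idx ?e ?f 0) (gi (mult g l))"
    note block = B0_supp_block[OF True]
    have u: "?u \<in> G" "d ?u = ?e" using hom_loop[OF idx_in[OF MI_pos[OF block(1)]] block(3)] by auto
    have "to_matrix X ?e ?f (idx_inv ?e ?f (mult g l)) (idx_inv ?e ?f l) = \<beta> ?u (X l g)"
      unfolding to_matrix_def mat_coord_def
      using block idx_inv_less idx_idx_inv by simp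
    then show ?thesis
      using True u B0_mem[OF X True] beta_inv_left unfolding of_matrix_def by simp
  qed (simp add: of_matrix_def B0_zero[OF X])
qed

lemma to_of_matrix:
  assumes M: "M \<in> mat_carrier G mult gi E"
  shows "to_matrix (of_matrix M) = M"
proof (intro ext)
  fix e f i j
  show "to_matrix (of_matrix M) e f i j = M e f i j"
  proof (cases "(e, f) \<in> MI \<and> i < N e f \<and> j < N e f")
    case True
    then have ef: "(e, f) \<in> MI" and i: "i < N e f" and j: "j < N e f" by auto
    let ?a = "idx e f i" and ?b = "idx e f j"
    let ?u = "mult (idx e f 0) (gi ?a)"
    have a: "?a \<in> hom e f" and b: "?b \<in> hom e f" using idx_in i j by auto
    have u: "?u \<in> G" "r ?u = e" using hom_loop[OF idx_in[OF MI_pos[OF ef]] a] by auto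
    have "of_matrix M ?b (mult ?a (gi ?b)) = \<beta> (gi ?u) (M e f i j)"
      unfolding of_matrix_def
      using hom_B0_supp[OF a b] b idx_inv_idx[OF i] idx_inv_idx[OF j] unfolding hom_iff by simp
    moreover have "M e f i j \<in> E (r ?u)" using M True u unfolding mat_carrier_iff by metis
    ultimately show ?thesis
      using True u beta_inv_right unfolding to_matrix_def mat_coord_def by simp
  next
    case False
    then show ?thesis using M unfolding to_matrix_def mat_carrier_iff by metis
  qed
qed

lemma to_matrix_bij: "bij_betw to_matrix B0 (mat_carrier G mult gi E)"
  by (rule bij_betw_byWitness[where f' = of_matrix])
    (auto simp: of_to_matrix to_of_matrix to_matrix_mem of_matrix_mem)

lemma to_matrix_add:
  assumes X: "X \<in> B0" and Y: "Y \<in> B0"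
  shows "to_matrix (\<lambda>h g. X h g + Y h g) = (\<lambda>e f i j. to_matrix X e f i j + to_matrix Y e f i j)"
proof (intro ext)
  fix e f i j
  show "to_matrix (\<lambda>h g. X h g + Y h g) e f i j = to_matrix X e f i j + to_matrix Y e f i j"
  proof (cases "(e, f) \<in> MI \<and> i < N e f \<and> j < N e f")
    case True
    then show ?thesis using mat_coord_add[OF X Y block_members[OF True]] unfolding to_matrix_def by simp
  qed (simp add: to_matrix_outside)
qed

lemma to_matrix_smul:
  assumes X: "X \<in> B0"
  shows "to_matrix (\<lambda>h g. smul c (X h g)) = (\<lambda>e f i j. smul c (to_matrix X e f i j))"
proof (intro ext)
  fix e f i j
  show "to_matrix (\<lambda>h g. smul c (X h g)) e f i j = smul c (to_matrix X e f i j)"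
  proof (cases "(e, f) \<in> MI \<and> i < N e f \<and> j < N e f")
    case True
    then show ?thesis using mat_coord_smul[OF X block_members[OF True]] unfolding to_matrix_def by simp
  qed (simp add: to_matrix_outside)
qed

lemma to_matrix_one: "to_matrix one0 = mat_one G mult gi one"
proof (intro ext)
  fix e f i j
  show "to_matrix one0 e f i j = mat_one G mult gi one e f i j"
  proof (cases "(e, f) \<in> MI \<and> i < N e f \<and> j < N e f")
    case True
    have "to_matrix one0 e f i j = (if idx e f i = idx e f j then one e else 0)"
      using True mat_coord_one[OF block_members[OF True]] unfolding to_matrix_def by simp
    moreover have "idx e f i = idx e f j \<longleftrightarrow> i = j"
      using True idx_inv_idx[of i e f] idx_inv_idx[of j e f] by metis
    ultimately show ?thesis using True unfolding mat_one_def by simp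
  next
    case False
    then have "mat_one G mult gi one e f i j = 0" unfolding mat_one_def by auto
    then show ?thesis using to_matrix_outside[OF False] by simp
  qed
qed

lemma to_matrix_mult:
  assumes X: "X \<in> B0" and Y: "Y \<in> B0"
  shows "to_matrix (smm X Y) = mat_mult G mult gi (to_matrix X) (to_matrix Y)"
proof (intro ext)
  fix e f i j
  show "to_matrix (smm X Y) e f i j = mat_mult G mult gi (to_matrix X) (to_matrix Y) e f i j"
  proof (cases "(e, f) \<in> MI \<and> i < N e f \<and> j < N e f")
    case True
    let ?p = "idx e f 0" and ?c = "\<lambda>Z a b. mat_coord (idx e f 0) Z a b"
    have hom: "?p \<in> hom e f" "idx e f i \<in> hom e f" "idx e f j \<in> hom e f"
      using True MI_pos idx_in by auto
    have "to_matrix (smm X Y) e f i j = (\<Sum>k\<in>hom e f. ?c X (idx e f i) k * ?c Y k (idx e f j))"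
      using True mat_coord_mult[OF X Y hom] unfolding to_matrix_def by simp
    also have "\<dots> = (\<Sum>k\<in>{0..<N e f}. ?c X (idx e f i) (idx e f k) * ?c Y (idx e f k) (idx e f j))"
      by (rule sum.reindex_bij_betw[OF idx_bij, symmetric])
    also have "\<dots> = mat_mult G mult gi (to_matrix X) (to_matrix Y) e f i j"
      using True unfolding mat_mult_def to_matrix_def by (simp add: atLeast0LessThan)
    finally show ?thesis .
  next
    case False
    have "to_matrix X e f i k * to_matrix Y e f k j = 0" for k
    proof -
      consider "\<not> ((e, f) \<in> MI \<and> i < N e f \<and> k < N e f)" | "\<not> ((e, f) \<in> MI \<and> k < N e f \<and> j < N e f)"
        using False by blast
      then show ?thesis
      proof cases
        case 1
        then show ?thesis using to_matrix_outside[OF 1] by simp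
      next
        case 2
        then show ?thesis using to_matrix_outside[OF 2] by simp
      qed
    qed
    then show ?thesis using False to_matrix_outside unfolding mat_mult_def by simp
  qed
qed

lemma mat_one_mult:
  assumes M: "M \<in> mat_carrier G mult gi E"
  shows "mat_mult G mult gi (mat_one G mult gi one) M = M"
proof (intro ext)
  fix e f i j
  let ?one = "mat_one G mult gi one"
  show "mat_mult G mult gi ?one M e f i j = M e f i j"
  proof (cases "(e, f) \<in> MI \<and> i < N e f \<and> j < N e f")
    case True
    have "(\<Sum>k<N e f. ?one e f i k * M e f k j) = ?one e f i i * M e f i j"
      using True by (intro sum_eq_single) (auto simp: mat_one_def)
    also have "\<dots> = M e f i j"
      using True one_left[of e "M e f i j"] mat_carrier_mem[OF M True]
      unfolding mat_one_def MI_iff by simp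
    finally show ?thesis unfolding mat_mult_def .
  next
    case False
    have "?one e f i k * M e f k j = 0" for k
    proof (cases "(e, f) \<in> MI \<and> i < N e f \<and> i = k")
      case True
      then have "\<not> ((e, f) \<in> MI \<and> k < N e f \<and> j < N e f)" using False by blast
      then show ?thesis using mat_carrier_zero[OF M] by simp
    qed (auto simp: mat_one_def)
    then show ?thesis using mat_carrier_zero[OF M False] unfolding mat_mult_def by simp
  qed
qed

lemma mat_mult_one:
  assumes M: "M \<in> mat_carrier G mult gi E"
  shows "mat_mult G mult gi M (mat_one G mult gi one) = M"
proof (intro ext)
  fix e f i j
  let ?one = "mat_one G mult gi one"
  show "mat_mult G mult gi M ?one e f i j = M e f i j"
  proof (cases "(e, f) \<in> MI \<and> i < N e f \<and> j < N e f")
    case True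
    have "(\<Sum>k<N e f. M e f i k * ?one e f k j) = M e f i j * ?one e f j j"
      using True by (intro sum_eq_single) (auto simp: mat_one_def)
    also have "\<dots> = M e f i j"
      using True one_right[of e "M e f i j"] mat_carrier_mem[OF M True]
      unfolding mat_one_def MI_iff by simp
    finally show ?thesis unfolding mat_mult_def .
  next
    case False
    have "M e f i k * ?one e f k j = 0" for k
    proof (cases "(e, f) \<in> MI \<and> k < N e f \<and> k = j")
      case True
      then have "\<not> ((e, f) \<in> MI \<and> i < N e f \<and> k < N e f)" using False by blast
      then show ?thesis using mat_carrier_zero[OF M] by simp
    qed (auto simp: mat_one_def)
    then show ?thesis using mat_carrier_zero[OF M False] unfolding mat_mult_def by simp
  qed
qed

text \<open>\<open>B_0\<close> inherits its unit laws from the matrix algebra, because \<open>to_matrix\<close> is an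
  injective multiplicative map sending \<open>one0\<close> to the identity matrix.\<close>
lemma B0_one_mult:
  assumes X: "X \<in> B0"
  shows "smm one0 X = X"
proof -
  have "to_matrix (smm one0 X) = to_matrix X"
    using to_matrix_mult[OF one_B0 X] to_matrix_one mat_one_mult[OF to_matrix_mem[OF X]] by simp
  with bij_betw_imp_inj_on[OF to_matrix_bij] show ?thesis
    using mult_B0[OF one_B0 X] X by (rule inj_onD)
qed

lemma B0_mult_one:
  assumes X: "X \<in> B0"
  shows "smm X one0 = X"
proof -
  have "to_matrix (smm X one0) = to_matrix X"
    using to_matrix_mult[OF X one_B0] to_matrix_one mat_mult_one[OF to_matrix_mem[OF X]] by simp
  with bij_betw_imp_inj_on[OF to_matrix_bij] show ?thesis
    using mult_B0[OF X one_B0] X by (rule inj_onD)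
qed

lemma B0_unital_subalgebra:
  "B0 \<subseteq> smash_carrier G E \<and>
   (\<lambda>h g. 0) \<in> B0 \<and>
   (\<forall>X\<in>B0. \<forall>Y\<in>B0. (\<lambda>h g. X h g + Y h g) \<in> B0 \<and> smm X Y \<in> B0) \<and>
   (\<forall>a. \<forall>X\<in>B0. (\<lambda>h g. smul a (X h g)) \<in> B0) \<and>
   one0 \<in> B0 \<and>
   (\<forall>X\<in>B0. smm one0 X = X \<and> smm X one0 = X)"
proof (intro conjI ballI allI)
  show "B0 \<subseteq> smash_carrier G E" unfolding B0_carrier_def by blast
  show "(\<lambda>h g. 0) \<in> B0" by (rule zero_B0)
  show "one0 \<in> B0" by (rule one_B0)
  fix X assume X: "X \<in> B0"
  show "smm one0 X = X" using X by (rule B0_one_mult)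
  show "smm X one0 = X" using X by (rule B0_mult_one)
  show "(\<lambda>h g. smul a (X h g)) \<in> B0" for a using X by (rule smul_B0)
  fix Y assume Y: "Y \<in> B0"
  show "(\<lambda>h g. X h g + Y h g) \<in> B0" using X Y by (rule add_B0)
  show "smm X Y \<in> B0" using X Y by (rule mult_B0)
qed

lemma B0_matrix_iso:
  "\<exists>\<phi>. bij_betw \<phi> B0 (mat_carrier G mult gi E) \<and>
     (\<forall>X\<in>B0. \<forall>Y\<in>B0.
        \<phi> (\<lambda>h g. X h g + Y h g) = (\<lambda>e f i j. \<phi> X e f i j + \<phi> Y e f i j) \<and>
        \<phi> (smm X Y) = mat_mult G mult gi (\<phi> X) (\<phi> Y)) \<and>
     (\<forall>a. \<forall>X\<in>B0. \<phi> (\<lambda>h g. smul a (X h g)) = (\<lambda>e f i j. smul a (\<phi> X e f i j))) \<and>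
     \<phi> one0 = mat_one G mult gi one"
proof (intro exI[of _ to_matrix] conjI ballI allI)
  show "bij_betw to_matrix B0 (mat_carrier G mult gi E)" by (rule to_matrix_bij)
  show "to_matrix one0 = mat_one G mult gi one" by (rule to_matrix_one)
  fix X assume X: "X \<in> B0"
  show "to_matrix (\<lambda>h g. smul a (X h g)) = (\<lambda>e f i j. smul a (to_matrix X e f i j))" for a
    using X by (rule to_matrix_smul)
  fix Y assume Y: "Y \<in> B0"
  show "to_matrix (\<lambda>h g. X h g + Y h g) = (\<lambda>e f i j. to_matrix X e f i j + to_matrix Y e f i j)"
    using X Y by (rule to_matrix_add)
  show "to_matrix (smm X Y) = mat_mult G mult gi (to_matrix X) (to_matrix Y)"
    using X Y by (rule to_matrix_mult)
qed

end

theorem theorem3p7: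
  fixes G :: "'g set" and mult :: "'g \<Rightarrow> 'g \<Rightarrow> 'g" and gi :: "'g \<Rightarrow> 'g"
    and smul :: "'k::comm_ring_1 \<Rightarrow> 'r::ring \<Rightarrow> 'r"
    and E :: "'g \<Rightarrow> 'r set" and \<beta> :: "'g \<Rightarrow> 'r \<Rightarrow> 'r" and one :: "'g \<Rightarrow> 'r"
  assumes "finite G"
    and "groupoid G mult gi"
    and "kalgebra smul"
    and "groupoid_action G mult gi smul E \<beta>"
    and "local_units G mult gi E one"
  shows
    "(B0_carrier G mult gi E \<subseteq> smash_carrier G E \<and>
      (\<lambda>h g. 0) \<in> B0_carrier G mult gi E \<and>
      (\<forall>X\<in>B0_carrier G mult gi E. \<forall>Y\<in>B0_carrier G mult gi E.
          (\<lambda>h g. X h g + Y h g) \<in> B0_carrier G mult gi E \<and>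
          smash_mult G mult gi \<beta> X Y \<in> B0_carrier G mult gi E) \<and>
      (\<forall>a. \<forall>X\<in>B0_carrier G mult gi E. (\<lambda>h g. smul a (X h g)) \<in> B0_carrier G mult gi E) \<and>
      B0_one G mult gi one \<in> B0_carrier G mult gi E \<and>
      (\<forall>X\<in>B0_carrier G mult gi E.
          smash_mult G mult gi \<beta> (B0_one G mult gi one) X = X \<and>
          smash_mult G mult gi \<beta> X (B0_one G mult gi one) = X))
     \<and>
     (\<exists>\<phi>. bij_betw \<phi> (B0_carrier G mult gi E) (mat_carrier G mult gi E) \<and>
        (\<forall>X\<in>B0_carrier G mult gi E. \<forall>Y\<in>B0_carrier G mult gi E.
           \<phi> (\<lambda>h g. X h g + Y h g) = (\<lambda>e f i j. \<phi> X e f i j + \<phi> Y e f i j) \<and>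
           \<phi> (smash_mult G mult gi \<beta> X Y) = mat_mult G mult gi (\<phi> X) (\<phi> Y)) \<and>
        (\<forall>a. \<forall>X\<in>B0_carrier G mult gi E. \<phi> (\<lambda>h g. smul a (X h g)) = (\<lambda>e f i j. smul a (\<phi> X e f i j))) \<and>
        \<phi> (B0_one G mult gi one) = mat_one G mult gi one)"
proof -
  interpret B0_setting G mult gi smul E \<beta> one
    using assms by unfold_locales
  show ?thesis using B0_unital_subalgebra B0_matrix_iso by (rule conjI)
qed

end
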